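(* Let $1\le\ell\le r$ and let $\mathscr I=[I_0,I_1,\dots,I_\ell]$ be an ideal of $\Omega_{H_\ell}$ with $I_0=p\mathbb{Z}$. Then for each $1\le i\le\ell$: (1) $I_i=S(I_{i-1})$ or $I_i=L(I_{i-1})$; and (2) $I_i=J_{i,0}(p^{k+1})$ for some $0\le k\le i$.
   Context: Fix a prime $p$ and an integer $r\ge0$. For $0\le k\le r$ let $R_k$ be the commutative ring which is free as a $\mathbb{Z}$-module with basis $X_{k,0},\dots,X_{k,k}$ and multiplication $X_{k,i}X_{k,j}=p^{k-\max(i,j)}X_{k,\min(i,j)}$; thus $X_{k,k}=1$, and an integer $n$ is identified with $nX_{k,k}$. For $0\le k\le\ell\le r$ define: the additive map $\mathrm{ind}^\ell_k:R_k\to R_\ell$, $X_{k,i}\mapsto X_{\ell,i}$; the ring homomorphism $\mathrm{res}^\ell_k:R_\ell\to R_k$, $\mathrm{res}^\ell_k(X_{\ell,i})=p^{\ell-k}X_{k,i}$ if $i\le k$ and $=p^{\ell-i}$ if $i\ge k$; and the multiplicative map $\mathrm{jnd}^\ell_k:R_k\to R_\ell$, $$\mathrm{jnd}^\ell_k\Big(\sum_{i=0}^k m_iX_{k,i}\Big)=m_kX_{\ell,\ell}+\sum_{k\le i<\ell}\frac{m_k^{p^{\ell-i}}-m_k^{p^{\ell-i-1}}}{p^{\ell-i}}X_{\ell,i}+\sum_{0\le i<k}\frac{(\sum_{s=i}^k m_sp^{k-s})^{p^{\ell-k}}-(\sum_{s=i+1}^k m_sp^{k-s})^{p^{\ell-k}}}{p^{\ell-i}}X_{\ell,i}$$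 ($m_i\in\mathbb{Z}$). An ideal of $\Omega_{H_n}$ is a sequence $[I_0,\dots,I_n]$ of ideals $I_k\subseteq R_k$ such that for every $1\le k\le n$: $\mathrm{ind}^k_{k-1}(I_{k-1})\subseteq I_k$, $\mathrm{res}^k_{k-1}(I_k)\subseteq I_{k-1}$, $\mathrm{jnd}^k_{k-1}(I_{k-1})\subseteq I_k$. For an ideal $I\subseteq R_{i-1}$: $L(I)=(\mathrm{res}^i_{i-1})^{-1}(I)\subseteq R_i$, and $S(I)$ is the ideal of $R_i$ generated by $\mathrm{ind}^i_{i-1}(I)\cup\mathrm{jnd}^i_{i-1}(I)$. For $0\le j\le i$, $F_{i,j}=X_{i,j}-p^{i-j}$; for $x\in\mathbb{Z}$ and $i\ge1$, $J_{i,0}(x)\subseteq R_i$ is the ideal generated by $x,F_{i,0},\dots,F_{i,i-1}$. *)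

theory Defs
  imports Main "HOL-Computational_Algebra.Primes"
begin

text \<open>Elements of R_k are represented by their coefficient functions
  m :: nat \<Rightarrow> int w.r.t. the basis X_{k,0},...,X_{k,k}, i.e. m i is the
  coefficient of X_{k,i}; coefficients with index > k are zero.\<close>

type_synonym elt = "nat \<Rightarrow> int"

definition carrierR :: "nat \<Rightarrow> elt set" where
  "carrierR k = {m. \<forall>i>k. m i = 0}"

definition Xb :: "nat \<Rightarrow> nat \<Rightarrow> elt" where
  "Xb k i = (\<lambda>j. if j = i then 1 else 0)"

definition addR :: "elt \<Rightarrow> elt \<Rightarrow> elt" where
  "addR a b = (\<lambda>j. a j + b j)"

definition smulR :: "int \<Rightarrow> elt \<Rightarrow> elt" where
  "smulR c a = (\<lambda>j. c * a j)"

text \<open>Multiplication in R_k: X_{k,i} X_{k,j} = p^{k - max i j} X_{k, min i j}.\<close>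
definition mulR :: "int \<Rightarrow> nat \<Rightarrow> elt \<Rightarrow> elt \<Rightarrow> elt" where
  "mulR p k a b = (\<lambda>t. if t \<le> k then
      (\<Sum>i\<le>k. \<Sum>j\<le>k. if min i j = t then a i * b j * p ^ (k - max i j) else 0)
    else 0)"

text \<open>An integer n is identified with n X_{k,k}.\<close>
definition intR :: "nat \<Rightarrow> int \<Rightarrow> elt" where
  "intR k n = smulR n (Xb k k)"

definition ideal_R :: "int \<Rightarrow> nat \<Rightarrow> elt set \<Rightarrow> bool" where
  "ideal_R p k I \<longleftrightarrow> I \<subseteq> carrierR k \<and> (\<lambda>_. 0) \<in> I \<and>
     (\<forall>a\<in>I. \<forall>b\<in>I. addR a b \<in> I) \<and> (\<forall>a\<in>I. smulR (-1) a \<in> I) \<and>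
     (\<forall>r\<in>carrierR k. \<forall>a\<in>I. mulR p k r a \<in> I)"

definition gen_ideal :: "int \<Rightarrow> nat \<Rightarrow> elt set \<Rightarrow> elt set" where
  "gen_ideal p k G = \<Inter>{J. ideal_R p k J \<and> G \<subseteq> J}"

text \<open>ind^l_k : X_{k,i} \<mapsto> X_{l,i}; on coefficient functions this is the identity.\<close>
definition indR :: "nat \<Rightarrow> nat \<Rightarrow> elt \<Rightarrow> elt" where
  "indR l k m = m"

text \<open>res^l_k(X_{l,i}) = p^{l-k} X_{k,i} if i \<le> k, and p^{l-i} (= p^{l-i} X_{k,k}) if i \<ge> k;
  extended additively.\<close>
definition resR :: "int \<Rightarrow> nat \<Rightarrow> nat \<Rightarrow> elt \<Rightarrow> elt" where
  "resR p l k m = (\<lambda>t. if t < k then p ^ (l - k) * m t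
      else if t = k then (\<Sum>i\<in>{k..l}. m i * p ^ (l - i)) else 0)"

definition jndR :: "int \<Rightarrow> nat \<Rightarrow> nat \<Rightarrow> elt \<Rightarrow> elt" where
  "jndR p l k m = (\<lambda>i.
     if i = l then m k
     else if k \<le> i \<and> i < l then
       (m k ^ (nat p ^ (l - i)) - m k ^ (nat p ^ (l - i - 1))) div p ^ (l - i)
     else if i < k then
       ((\<Sum>s\<in>{i..k}. m s * p ^ (k - s)) ^ (nat p ^ (l - k))
        - (\<Sum>s\<in>{i+1..k}. m s * p ^ (k - s)) ^ (nat p ^ (l - k))) div p ^ (l - i)
     else 0)"

definition omega_ideal :: "int \<Rightarrow> nat \<Rightarrow> (nat \<Rightarrow> elt set) \<Rightarrow> bool" where
  "omega_ideal p n I \<longleftrightarrow> (\<forall>k\<le>n. ideal_R p k (I k)) \<and>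
     (\<forall>k\<in>{1..n}. indR k (k-1) ` I (k-1) \<subseteq> I k \<and>
                 resR p k (k-1) ` I k \<subseteq> I (k-1) \<and>
                 jndR p k (k-1) ` I (k-1) \<subseteq> I k)"

definition Lop :: "int \<Rightarrow> nat \<Rightarrow> elt set \<Rightarrow> elt set" where
  "Lop p i I = {x \<in> carrierR i. resR p i (i-1) x \<in> I}"

definition Sop :: "int \<Rightarrow> nat \<Rightarrow> elt set \<Rightarrow> elt set" where
  "Sop p i I = gen_ideal p i (indR i (i-1) ` I \<union> jndR p i (i-1) ` I)"

definition Fel :: "int \<Rightarrow> nat \<Rightarrow> nat \<Rightarrow> elt" where
  "Fel p i j = addR (Xb i j) (intR i (- (p ^ (i - j))))"

definition J0 :: "int \<Rightarrow> nat \<Rightarrow> int \<Rightarrow> elt set" where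
  "J0 p i x = gen_ideal p i ({intR i x} \<union> {Fel p i j | j. j < i})"

definition pZ :: "int \<Rightarrow> elt set" where
  "pZ p = {intR 0 (p * z) | z. True}"

end

theory Submission
  imports Defs
begin

text \<open>The map aug sending X_{i,j} to p^(i-j) is a ring homomorphism R_i \<rightarrow> \<int> whose
  kernel is spanned by the F_{i,j}, and J_{i,0}(x) is the preimage of x\<int>. Since aug \<circ> res = aug,
  L(J_{i-1,0}(x)) = J_{i,0}(x), so I_i \<subseteq> J_{i,0}(x) when I_{i-1} = J_{i-1,0}(x). Conversely ind and jnd
  of the generators of J_{i-1,0}(x) produce all F_{i,j} and px, so J_{i,0}(px) \<subseteq> I_i. As p is prime,
  nothing lies strictly in between; in the lower case I_i = S(I_{i-1}), in the upper one
  I_i = L(I_{i-1}). Induction from I_0 = p\<int> = J_{0,0}(p) finishes the proof.\<close>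

lemma ideal_R_subset_carrierR: "ideal_R p k K \<Longrightarrow> K \<subseteq> carrierR k"
  by (simp add: ideal_R_def)

lemma ideal_R_zero: "ideal_R p k K \<Longrightarrow> (\<lambda>_. 0) \<in> K"
  by (simp add: ideal_R_def)

lemma ideal_R_addR: "ideal_R p k K \<Longrightarrow> a \<in> K \<Longrightarrow> b \<in> K \<Longrightarrow> addR a b \<in> K"
  by (simp add: ideal_R_def)

lemma ideal_R_smulR:
  assumes K: "ideal_R p k K" and a: "a \<in> K"
  shows "smulR c a \<in> K"
proof -
  have nat_mult: "smulR (int n) a \<in> K" for n
  proof (induction n)
    case 0
    then show ?case using ideal_R_zero[OF K] by (simp add: smulR_def)
  next
    case (Suc n)
    have "smulR (int (Suc n)) a = addR (smulR (int n) a) a"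
      by (simp add: smulR_def addR_def fun_eq_iff algebra_simps)
    then show ?case using ideal_R_addR[OF K Suc a] by simp
  qed
  show ?thesis
  proof (cases "c \<ge> 0")
    case True
    then show ?thesis using nat_mult[of "nat c"] by simp
  next
    case False
    then have "smulR c a = smulR (-1) (smulR (int (nat (-c))) a)"
      by (simp add: smulR_def fun_eq_iff)
    moreover have "smulR (-1) (smulR (int (nat (-c))) a) \<in> K"
      using K nat_mult unfolding ideal_R_def by blast
    ultimately show ?thesis by simp
  qed
qed

lemma ideal_R_sum:
  assumes K: "ideal_R p k K" and "\<And>j. j \<in> A \<Longrightarrow> v j \<in> K"
  shows "(\<lambda>t. \<Sum>j\<in>A. v j t) \<in> K"
  using assms(2)
proof (induction A rule: infinite_finite_induct)
  case (insert x F)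
  have "(\<lambda>t. \<Sum>j\<in>insert x F. v j t) = addR (v x) (\<lambda>t. \<Sum>j\<in>F. v j t)"
    using insert(1,2) by (simp add: addR_def fun_eq_iff)
  then show ?case using ideal_R_addR[OF K] insert by simp
qed (use ideal_R_zero[OF K] in simp_all)

lemma ideal_R_carrierR: "ideal_R p k (carrierR k)"
  by (auto simp: ideal_R_def carrierR_def addR_def smulR_def mulR_def)

lemma gen_ideal_least: "ideal_R p k K \<Longrightarrow> G \<subseteq> K \<Longrightarrow> gen_ideal p k G \<subseteq> K"
  unfolding gen_ideal_def by blast

lemma gen_ideal_superset: "G \<subseteq> gen_ideal p k G"
  unfolding gen_ideal_def by blast

lemma ideal_R_gen_ideal:
  assumes "G \<subseteq> carrierR k"
  shows "ideal_R p k (gen_ideal p k G)"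
proof -
  let ?F = "{J. ideal_R p k J \<and> G \<subseteq> J}"
  have "carrierR k \<in> ?F" using assms ideal_R_carrierR by blast
  then have "\<Inter>?F \<subseteq> carrierR k" by (rule Inter_lower)
  then show ?thesis
    unfolding gen_ideal_def ideal_R_def[of p k "\<Inter>?F"] by (auto simp: ideal_R_def)
qed

lemma intR_apply: "intR i c t = (if t = i then c else 0)"
  by (simp add: intR_def smulR_def Xb_def)

lemma Fel_apply: "Fel p i j t = (if t = j then 1 else 0) - (if t = i then p ^ (i - j) else 0)"
  by (simp add: Fel_def addR_def intR_apply Xb_def)

lemma intR_carrierR: "intR i c \<in> carrierR i"
  by (simp add: carrierR_def intR_apply)

lemma Fel_carrierR: "j \<le> i \<Longrightarrow> Fel p i j \<in> carrierR i"
  by (simp add: carrierR_def Fel_apply)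

lemma ideal_R_intR_dvd:
  assumes "ideal_R p i K" "intR i x \<in> K" "x dvd y"
  shows "intR i y \<in> K"
proof -
  from \<open>x dvd y\<close> obtain c where "y = x * c" by (rule dvdE)
  then have "intR i y = smulR c (intR i x)"
    by (simp add: fun_eq_iff smulR_def intR_apply)
  then show ?thesis using ideal_R_smulR[OF assms(1,2)] by simp
qed

definition aug :: "int \<Rightarrow> nat \<Rightarrow> elt \<Rightarrow> int" where
  "aug p i a = (\<Sum>j\<le>i. a j * p ^ (i - j))"

definition aug_ideal :: "int \<Rightarrow> nat \<Rightarrow> int \<Rightarrow> elt set" where
  "aug_ideal p i x = {a \<in> carrierR i. x dvd aug p i a}"

lemma aug_addR: "aug p i (addR a b) = aug p i a + aug p i b"
  by (simp add: aug_def addR_def sum.distrib algebra_simps)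

lemma aug_smulR: "aug p i (smulR c a) = c * aug p i a"
  by (simp add: aug_def smulR_def sum_distrib_left algebra_simps)

lemma aug_Xb:
  assumes "j \<le> i"
  shows "aug p i (Xb i j) = p ^ (i - j)"
proof -
  have "aug p i (Xb i j) = (\<Sum>t\<le>i. if t = j then p ^ (i - j) else 0)"
    unfolding aug_def Xb_def by (rule sum.cong) auto
  then show ?thesis using assms by simp
qed

lemma aug_intR: "aug p i (intR i c) = c"
  by (simp add: intR_def aug_smulR aug_Xb)

lemma aug_Fel: "j \<le> i \<Longrightarrow> aug p i (Fel p i j) = 0"
  by (simp add: Fel_def aug_addR aug_Xb aug_intR)

lemma aug_mulR:
  assumes "a \<in> carrierR i" "b \<in> carrierR i"
  shows "aug p i (mulR p i a b) = aug p i a * aug p i b"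
proof -
  have "aug p i (mulR p i a b) = (\<Sum>t\<le>i. \<Sum>u\<le>i. \<Sum>v\<le>i.
      if min u v = t then a u * b v * p ^ (i - max u v) * p ^ (i - min u v) else 0)"
    unfolding aug_def mulR_def by (auto simp: sum_distrib_right intro!: sum.cong)
  also have "\<dots> = (\<Sum>u\<le>i. \<Sum>t\<le>i. \<Sum>v\<le>i.
      if min u v = t then a u * b v * p ^ (i - max u v) * p ^ (i - min u v) else 0)"
    by (rule sum.swap)
  also have "\<dots> = (\<Sum>u\<le>i. \<Sum>v\<le>i. \<Sum>t\<le>i.
      if min u v = t then a u * b v * p ^ (i - max u v) * p ^ (i - min u v) else 0)"
    by (intro sum.cong refl sum.swap)
  also have "\<dots> = (\<Sum>u\<le>i. \<Sum>v\<le>i. a u * b v * p ^ (i - max u v) * p ^ (i - min u v))"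
    by (intro sum.cong refl) (simp add: sum.delta)
  also have "\<dots> = (\<Sum>u\<le>i. \<Sum>v\<le>i. (a u * p ^ (i - u)) * (b v * p ^ (i - v)))"
  proof (intro sum.cong refl)
    fix u v
    have "(i - max u v) + (i - min u v) = (i - u) + (i - v)" by (simp add: max_def min_def)
    then show "a u * b v * p ^ (i - max u v) * p ^ (i - min u v) = (a u * p ^ (i - u)) * (b v * p ^ (i - v))"
      by (simp add: algebra_simps flip: power_add)
  qed
  also have "\<dots> = aug p i a * aug p i b"
    unfolding aug_def by (simp add: sum_product)
  finally show ?thesis .
qed

lemma ideal_R_aug_ideal: "ideal_R p i (aug_ideal p i x)"
proof -
  have "mulR p i r a \<in> carrierR i" for r a
    by (simp add: carrierR_def mulR_def)
  moreover have "aug p i (\<lambda>_. 0) = 0"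
    by (simp add: aug_def)
  ultimately show ?thesis
    using ideal_R_carrierR[of p i]
    by (auto simp: ideal_R_def aug_ideal_def aug_addR aug_smulR aug_mulR)
qed

lemma carrierR_decompose_Fel:
  assumes "a \<in> carrierR i"
  shows "a = addR (\<lambda>t. \<Sum>j<i. smulR (a j) (Fel p i j) t) (intR i (aug p i a))"
proof
  fix t
  consider "t < i" | "t = i" | "t > i" by linarith
  then show "a t = addR (\<lambda>t. \<Sum>j<i. smulR (a j) (Fel p i j) t) (intR i (aug p i a)) t"
  proof cases
    case 1
    then have "(\<Sum>j<i. smulR (a j) (Fel p i j) t) = (\<Sum>j<i. if j = t then a t else 0)"
      by (intro sum.cong) (auto simp: smulR_def Fel_apply)
    with 1 show ?thesis by (simp add: addR_def intR_apply)
  next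
    case 2
    have "aug p i a = (\<Sum>j<i. a j * p ^ (i - j)) + a i"
      by (simp add: aug_def lessThan_Suc_atMost[symmetric])
    with 2 show ?thesis
      by (simp add: addR_def intR_apply smulR_def Fel_apply sum_negf)
  next
    case 3
    with assms show ?thesis
      by (simp add: addR_def smulR_def Fel_apply intR_apply carrierR_def)
  qed
qed

lemma ideal_R_Fel_mem_iff:
  assumes K: "ideal_R p i K" and F: "\<And>j. j < i \<Longrightarrow> Fel p i j \<in> K"
    and a: "a \<in> carrierR i"
  shows "a \<in> K \<longleftrightarrow> intR i (aug p i a) \<in> K"
proof -
  define b where "b = (\<lambda>t. \<Sum>j<i. smulR (a j) (Fel p i j) t)"
  have b: "b \<in> K"
    unfolding b_def by (rule ideal_R_sum[OF K]) (auto intro: ideal_R_smulR[OF K] F)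
  have "a = addR b (intR i (aug p i a))"
    unfolding b_def by (rule carrierR_decompose_Fel[OF a])
  moreover have "intR i (aug p i a) = addR a (smulR (-1) b)"
    using calculation by (simp add: fun_eq_iff addR_def smulR_def)
  ultimately show ?thesis
    using ideal_R_addR[OF K] ideal_R_smulR[OF K] b by metis
qed

lemma aug_ideal_subset:
  assumes K: "ideal_R p i K" and x: "intR i x \<in> K" and F: "\<And>j. j < i \<Longrightarrow> Fel p i j \<in> K"
  shows "aug_ideal p i x \<subseteq> K"
  using ideal_R_Fel_mem_iff[OF K F] ideal_R_intR_dvd[OF K x] by (auto simp: aug_ideal_def)

lemma J0_eq_aug_ideal: "J0 p i x = aug_ideal p i x"
proof
  show "J0 p i x \<subseteq> aug_ideal p i x"
    unfolding J0_def
    by (rule gen_ideal_least[OF ideal_R_aug_ideal])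
       (auto simp: aug_ideal_def intR_carrierR Fel_carrierR aug_intR aug_Fel)
  show "aug_ideal p i x \<subseteq> J0 p i x"
    unfolding J0_def gen_ideal_def
  proof (rule Inter_greatest)
    fix K assume "K \<in> {J. ideal_R p i J \<and> {intR i x} \<union> {Fel p i j | j. j < i} \<subseteq> J}"
    then show "aug_ideal p i x \<subseteq> K" by (intro aug_ideal_subset) auto
  qed
qed

lemma aug_resR: "aug p n (resR p (Suc n) n a) = aug p (Suc n) a"
proof -
  have "{n..Suc n} = {n, Suc n}" by auto
  then have "aug p n (resR p (Suc n) n a) = (\<Sum>t<n. p * a t * p ^ (n - t)) + (a n * p + a (Suc n))"
    by (simp add: aug_def lessThan_Suc_atMost[symmetric] resR_def)
  also have "(\<Sum>t<n. p * a t * p ^ (n - t)) = (\<Sum>t<n. a t * p ^ (Suc n - t))"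
    by (intro sum.cong refl) (simp add: Suc_diff_le)
  finally show ?thesis
    by (simp add: aug_def lessThan_Suc_atMost[symmetric])
qed

lemma resR_carrierR: "resR p l k a \<in> carrierR k"
  by (simp add: resR_def carrierR_def)

lemma Lop_aug_ideal: "Lop p (Suc n) (aug_ideal p n x) = aug_ideal p (Suc n) x"
  by (auto simp: Lop_def aug_ideal_def aug_resR resR_carrierR)

lemma pZ_eq_aug_ideal: "pZ p = aug_ideal p 0 p"
proof
  show "pZ p \<subseteq> aug_ideal p 0 p"
    by (auto simp: pZ_def aug_ideal_def intR_carrierR aug_intR)
  show "aug_ideal p 0 p \<subseteq> pZ p"
  proof
    fix a assume "a \<in> aug_ideal p 0 p"
    then have a: "a \<in> carrierR 0" and "p dvd a 0"
      by (auto simp: aug_ideal_def aug_def)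
    then obtain z where "a 0 = p * z" by (elim dvdE)
    with a have "a = intR 0 (p * z)"
      by (auto simp: fun_eq_iff intR_apply carrierR_def)
    then show "a \<in> pZ p" by (auto simp: pZ_def)
  qed
qed

lemma ideal_R_between_aug_ideals:
  assumes q: "prime q" and K: "ideal_R p i K"
    and lower: "aug_ideal p i (q * x) \<subseteq> K" and upper: "K \<subseteq> aug_ideal p i x"
  shows "K = aug_ideal p i (q * x) \<or> K = aug_ideal p i x"
proof (cases "K \<subseteq> aug_ideal p i (q * x)")
  case True
  then show ?thesis using lower by blast
next
  case False
  then obtain a where aK: "a \<in> K" and a_not: "a \<notin> aug_ideal p i (q * x)" by blast
  then have a: "a \<in> carrierR i" "x dvd aug p i a"
    using upper by (auto simp: aug_ideal_def)
  then obtain u where u: "aug p i a = x * u" by (elim dvdE)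
  have "\<not> q dvd u"
    using a a_not u by (auto simp: aug_ideal_def)
  then have "coprime u q"
    using q by (simp add: prime_imp_coprime coprime_commute)
  then obtain s t where st: "s * u + t * q = 1"
    by (metis bezout_int coprime_iff_gcd_eq_1)
  have F: "Fel p i j \<in> K" if "j < i" for j
    using lower that by (auto simp: aug_ideal_def Fel_carrierR aug_Fel)
  have "intR i (x * u) \<in> K"
    using ideal_R_Fel_mem_iff[OF K F a(1)] aK u by simp
  moreover have "intR i (q * x) \<in> K"
    using lower by (auto simp: aug_ideal_def intR_carrierR aug_intR)
  moreover have "intR i x = addR (smulR s (intR i (x * u))) (smulR t (intR i (q * x)))"
    by (simp add: fun_eq_iff addR_def smulR_def intR_apply)
       (metis st mult.commute mult.left_commute mult.right_neutral distrib_left)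
  ultimately have "intR i x \<in> K"
    using ideal_R_addR[OF K] ideal_R_smulR[OF K] by metis
  then show ?thesis
    using aug_ideal_subset[OF K _ F] upper by blast
qed

lemma prime_nat_eq_Suc_Suc:
  assumes "prime (p :: int)"
  obtains q where "nat p = Suc (Suc q)" "p ^ nat p = p * p * p ^ q"
proof -
  have "nat p = Suc (Suc (nat p - 2))"
    using prime_ge_2_int[OF assms] by linarith
  moreover from this have "p ^ nat p = p * p * p ^ (nat p - 2)"
    by (metis power_Suc mult.assoc)
  ultimately show ?thesis by (rule that)
qed

lemma Fel_1_0_eq:
  assumes "prime p"
  shows "Fel p 1 0 = addR (smulR (p ^ (nat p - 2)) (indR 1 0 (intR 0 p)))
                          (smulR (-1) (jndR p 1 0 (intR 0 p)))"
proof
  fix t :: nat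
  obtain q where q: "nat p = Suc (Suc q)" "p ^ nat p = p * p * p ^ q"
    using prime_nat_eq_Suc_Suc[OF assms] .
  have "p \<noteq> 0" using assms by auto
  then have bottom: "(p ^ nat p - p) div p = p * p ^ q - 1"
    unfolding q(2) by (metis mult.assoc right_diff_distrib mult.right_neutral nonzero_mult_div_cancel_left)
  have exponent: "nat p - 2 = q" using q(1) by simp
  consider "t = 0" | "t = 1" | "t > 1" by linarith
  then show "Fel p 1 0 t = addR (smulR (p ^ (nat p - 2)) (indR 1 0 (intR 0 p)))
                          (smulR (-1) (jndR p 1 0 (intR 0 p))) t"
    by cases (simp_all add: Fel_apply addR_def smulR_def indR_def intR_apply jndR_def bottom exponent)
qed

lemma Fel_Suc_Suc_eq:
  assumes "prime p"
  shows "Fel p (Suc (Suc m)) (Suc m) =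
    addR (jndR p (Suc (Suc m)) (Suc m) (Fel p (Suc m) m))
         (smulR ((-1) ^ nat p * p ^ (nat p - 2)) (indR (Suc (Suc m)) (Suc m) (Fel p (Suc m) m)))"
proof
  fix t :: nat
  obtain q where q: "nat p = Suc (Suc q)" "p ^ nat p = p * p * p ^ q"
    using prime_nat_eq_Suc_Suc[OF assms] .
  have p: "p \<noteq> 0" using assms by auto
  let ?x = "Fel p (Suc m) m"
  have x: "?x s = (if s = m then 1 else if s = Suc m then -p else 0)" for s
    by (simp add: Fel_apply)
  have tail: "(\<Sum>s\<in>{i..Suc m}. ?x s * p ^ (Suc m - s)) =
      (if i \<le> m then 0 else if i = Suc m then -p else 0)" for i
  proof -
    have "(\<Sum>s\<in>{i..Suc m}. ?x s * p ^ (Suc m - s)) =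
        (\<Sum>s\<in>{i..Suc m}. (if s = m then p else 0) + (if s = Suc m then -p else 0))"
      by (intro sum.cong) (auto simp: x)
    then show ?thesis by (simp add: sum.distrib)
  qed
  have top: "((-p) ^ nat p + p) div p = (-1) ^ nat p * p * p ^ q + 1"
  proof -
    have "(-p) ^ nat p + p = p * ((-1) ^ nat p * p * p ^ q + 1)"
      unfolding power_minus[of p] q(2) by (simp add: algebra_simps)
    then show ?thesis using p by simp
  qed
  have below: "(0 ^ nat p - (-p) ^ nat p) div p\<^sup>2 = - ((-1) ^ nat p * p ^ q)"
  proof -
    have "0 ^ nat p - (-p) ^ nat p = p\<^sup>2 * (- ((-1) ^ nat p * p ^ q))"
      unfolding power_minus[of p] q(2) by (simp add: q(1) power2_eq_square algebra_simps)
    then show ?thesis using p by (metis nonzero_mult_div_cancel_left zero_eq_power2)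
  qed
  have "jndR p (Suc (Suc m)) (Suc m) ?x t =
      (if t = m then - ((-1) ^ nat p * p ^ q) else if t = Suc m then (-1) ^ nat p * p * p ^ q + 1
       else if t = Suc (Suc m) then -p else 0)"
    unfolding jndR_def tail using top below
    by (auto simp: x Suc_diff_le numeral_2_eq_2 q(1) simp del: power_Suc)
  moreover have "nat p - 2 = q" using q(1) by simp
  ultimately show "Fel p (Suc (Suc m)) (Suc m) t =
    addR (jndR p (Suc (Suc m)) (Suc m) ?x)
         (smulR ((-1) ^ nat p * p ^ (nat p - 2)) (indR (Suc (Suc m)) (Suc m) ?x)) t"
    by (auto simp: Fel_apply addR_def smulR_def indR_def)
qed

lemma Fel_Suc_eq_indR:
  assumes "j < n"
  shows "Fel p (Suc n) j = addR (indR (Suc n) n (Fel p n j)) (smulR (p ^ (n - j)) (Fel p (Suc n) n))"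
  using assms by (auto simp: fun_eq_iff Fel_apply addR_def smulR_def indR_def Suc_diff_le)

lemma intR_Suc_eq_indR:
  "intR (Suc n) (p * x) = addR (indR (Suc n) n (intR n x)) (smulR (-x) (Fel p (Suc n) n))"
  by (auto simp: fun_eq_iff Fel_apply addR_def smulR_def indR_def intR_apply)

text \<open>For n > 0 the generator F_{n,n-1} of aug_ideal p n x supplies F_{n+1,n}; for n = 0 this role
  is played by p, whence the divisibility hypothesis.\<close>
lemma aug_ideal_Suc_subset:
  assumes p: "prime p" and K: "ideal_R p (Suc n) K"
    and ind: "indR (Suc n) n ` aug_ideal p n x \<subseteq> K"
    and jnd: "jndR p (Suc n) n ` aug_ideal p n x \<subseteq> K"
    and base: "n = 0 \<Longrightarrow> x dvd p"
  shows "aug_ideal p (Suc n) (p * x) \<subseteq> K"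
proof -
  have in_aug_ideal: "a \<in> carrierR n \<Longrightarrow> x dvd aug p n a \<Longrightarrow> a \<in> aug_ideal p n x" for a
    by (simp add: aug_ideal_def)
  have F_top: "Fel p (Suc n) n \<in> K"
  proof (cases n)
    case 0
    with base have "intR n p \<in> aug_ideal p n x"
      by (intro in_aug_ideal) (simp_all add: intR_carrierR aug_intR)
    with 0 ind jnd have "indR 1 0 (intR 0 p) \<in> K" "jndR p 1 0 (intR 0 p) \<in> K"
      by auto
    with 0 show ?thesis
      using Fel_1_0_eq[OF p] ideal_R_addR[OF K] ideal_R_smulR[OF K] by simp
  next
    case (Suc m)
    then have "Fel p (Suc m) m \<in> aug_ideal p n x"
      by (intro in_aug_ideal) (simp_all add: Fel_carrierR aug_Fel)
    with Suc ind jnd have "indR (Suc (Suc m)) (Suc m) (Fel p (Suc m) m) \<in> K"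
        "jndR p (Suc (Suc m)) (Suc m) (Fel p (Suc m) m) \<in> K"
      by auto
    with Suc show ?thesis
      using Fel_Suc_Suc_eq[OF p] ideal_R_addR[OF K] ideal_R_smulR[OF K] by simp
  qed
  have F_all: "Fel p (Suc n) j \<in> K" if "j < Suc n" for j
  proof (cases "j = n")
    case False
    with that have "j < n" by simp
    then have "Fel p n j \<in> aug_ideal p n x"
      by (intro in_aug_ideal) (simp_all add: Fel_carrierR aug_Fel)
    then have "indR (Suc n) n (Fel p n j) \<in> K"
      using ind by blast
    then show ?thesis
      using Fel_Suc_eq_indR[OF \<open>j < n\<close>] ideal_R_addR[OF K] ideal_R_smulR[OF K F_top] by metis
  qed (use F_top in simp)
  have "intR n x \<in> aug_ideal p n x"
    by (intro in_aug_ideal) (simp_all add: intR_carrierR aug_intR)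
  then have "indR (Suc n) n (intR n x) \<in> K"
    using ind by blast
  then have "intR (Suc n) (p * x) \<in> K"
    using intR_Suc_eq_indR ideal_R_addR[OF K] ideal_R_smulR[OF K F_top] by metis
  then show ?thesis
    using aug_ideal_subset[OF K _ F_all] by blast
qed

lemma omega_ideal_Suc_cases:
  assumes p: "prime p" and I: "omega_ideal p l I" and n: "Suc n \<le> l"
    and In: "I n = aug_ideal p n x" and base: "n = 0 \<Longrightarrow> x dvd p"
  shows "I (Suc n) = aug_ideal p (Suc n) (p * x) \<and> I (Suc n) = Sop p (Suc n) (I n) \<or>
         I (Suc n) = aug_ideal p (Suc n) x \<and> I (Suc n) = Lop p (Suc n) (I n)"
proof -
  have K: "ideal_R p (Suc n) (I (Suc n))"
    using I n by (simp add: omega_ideal_def)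
  from I n have ind: "indR (Suc n) n ` I n \<subseteq> I (Suc n)"
    and res: "resR p (Suc n) n ` I (Suc n) \<subseteq> I n"
    and jnd: "jndR p (Suc n) n ` I n \<subseteq> I (Suc n)"
    unfolding omega_ideal_def by (metis atLeastAtMost_iff diff_Suc_1 le_add1 plus_1_eq_Suc)+
  define G where "G = indR (Suc n) n ` I n \<union> jndR p (Suc n) n ` I n"
  have Sop_eq: "Sop p (Suc n) (I n) = gen_ideal p (Suc n) G"
    by (simp add: Sop_def G_def)
  have "I (Suc n) \<subseteq> Lop p (Suc n) (I n)"
    using K res by (auto simp: Lop_def dest: ideal_R_subset_carrierR)
  then have upper: "I (Suc n) \<subseteq> aug_ideal p (Suc n) x"
    by (simp add: In Lop_aug_ideal)
  have "aug_ideal p (Suc n) (p * x) \<subseteq> I (Suc n)"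
    using aug_ideal_Suc_subset[OF p K _ _ base] ind jnd In by simp
  with ideal_R_between_aug_ideals[OF p K _ upper]
  consider "I (Suc n) = aug_ideal p (Suc n) (p * x)" | "I (Suc n) = aug_ideal p (Suc n) x"
    by blast
  then show ?thesis
  proof cases
    case 1
    have G: "G \<subseteq> I (Suc n)"
      using ind jnd by (simp add: G_def)
    then have S_le: "Sop p (Suc n) (I n) \<subseteq> I (Suc n)"
      unfolding Sop_eq by (rule gen_ideal_least[OF K])
    have "ideal_R p (Suc n) (gen_ideal p (Suc n) G)"
      using G K by (intro ideal_R_gen_ideal) (auto dest: ideal_R_subset_carrierR)
    then have "aug_ideal p (Suc n) (p * x) \<subseteq> Sop p (Suc n) (I n)"
      unfolding Sop_eq
      using aug_ideal_Suc_subset[OF p _ _ _ base] gen_ideal_superset[of G] In by (simp add: G_def)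
    with S_le 1 show ?thesis
      by blast
  next
    case 2
    then show ?thesis
      by (simp add: In Lop_aug_ideal)
  qed
qed

lemma omega_ideal_aug_ideal:
  assumes p: "prime p" and I: "omega_ideal p l I" and I0: "I 0 = pZ p" and n: "n \<le> l"
  shows "\<exists>k\<le>n. I n = aug_ideal p n (p ^ (k + 1))"
  using n
proof (induction n)
  case 0
  then show ?case
    using I0 pZ_eq_aug_ideal by auto
next
  case (Suc n)
  then obtain k where k: "k \<le> n" "I n = aug_ideal p n (p ^ (k + 1))"
    by auto
  from k(1) have "n = 0 \<Longrightarrow> p ^ (k + 1) dvd p"
    by simp
  then have "I (Suc n) = aug_ideal p (Suc n) (p * p ^ (k + 1)) \<or>
      I (Suc n) = aug_ideal p (Suc n) (p ^ (k + 1))"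
    using omega_ideal_Suc_cases[OF p I Suc(2) k(2)] by blast
  then show ?case
  proof
    assume "I (Suc n) = aug_ideal p (Suc n) (p * p ^ (k + 1))"
    then show ?case using k(1) by (intro exI[of _ "Suc k"]) simp
  next
    assume "I (Suc n) = aug_ideal p (Suc n) (p ^ (k + 1))"
    then show ?case using k(1) by (intro exI[of _ k]) simp
  qed
qed

theorem corollary6:
  fixes p :: int and r l :: nat and I :: "nat \<Rightarrow> elt set"
  assumes "prime p" and "1 \<le> l" and "l \<le> r"
    and "omega_ideal p l I" and "I 0 = pZ p"
  shows "\<forall>i\<in>{1..l}. (I i = Sop p i (I (i-1)) \<or> I i = Lop p i (I (i-1))) \<and>
            (\<exists>k\<le>i. I i = J0 p i (p ^ (k+1)))"
proof
  fix i assume "i \<in> {1..l}"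
  then obtain n where i: "i = Suc n" and n: "Suc n \<le> l"
    by (metis atLeastAtMost_iff Suc_pred le_less_trans less_one not_le)
  then obtain k where k: "k \<le> n" "I n = aug_ideal p n (p ^ (k + 1))"
    using omega_ideal_aug_ideal[OF assms(1,4,5), of n] by auto
  from k(1) have "n = 0 \<Longrightarrow> p ^ (k + 1) dvd p"
    by simp
  with omega_ideal_Suc_cases[OF assms(1,4) n k(2)] k(1)
  show "(I i = Sop p i (I (i-1)) \<or> I i = Lop p i (I (i-1))) \<and> (\<exists>k\<le>i. I i = J0 p i (p ^ (k+1)))"
    unfolding i J0_eq_aug_ideal by (auto intro: exI[of _ "Suc k"] exI[of _ k])
qed

end
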